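(* Let $\varepsilon \geq \gamma > 0$, and let $H$ be an $n$-vertex $k$-graph with $\delta_{k-1}(H) \geq (1/3 + \varepsilon) n$. Let $G$ be the $\gamma$-diamond graph of $H$. Then the independence number of $G$ satisfies $\alpha(G) \leq 2$.
   Context: $k \geq 2$. $\delta_{k-1}(H)$ is the minimum over $(k-1)$-subsets $S \subseteq V(H)$ of the number of edges containing $S$. For $x, y \in V(H)$, an $(x,y)$-diamond is a pair of edges $e, f$ of $H$ with $|e \cap f| = k-1$, $x \in e\setminus f$, $y \in f \setminus e$. The $\gamma$-diamond graph of an $n$-vertex $k$-graph $H$ is the graph $G$ on $V(H)$ with $xy \in E(G)$ if and only if $H$ contains at least $\gamma\binom{n}{k-1}$ distinct $(x,y)$-diamonds. *)

theory Defs
  imports Complex_Main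
begin

definition kgraph :: "nat \<Rightarrow> 'a set \<Rightarrow> 'a set set \<Rightarrow> bool" where
  "kgraph k V E \<longleftrightarrow> finite V \<and> (\<forall>e\<in>E. e \<subseteq> V \<and> card e = k)"

definition min_codegree :: "nat \<Rightarrow> 'a set \<Rightarrow> 'a set set \<Rightarrow> nat" where
  "min_codegree k V E = Min ((\<lambda>S. card {e\<in>E. S \<subseteq> e}) ` {S. S \<subseteq> V \<and> card S = k - 1})"

definition diamonds :: "nat \<Rightarrow> 'a set set \<Rightarrow> 'a \<Rightarrow> 'a \<Rightarrow> ('a set \<times> 'a set) set" where
  "diamonds k E x y = {(e, f). e \<in> E \<and> f \<in> E \<and> card (e \<inter> f) = k - 1 \<and> x \<in> e - f \<and> y \<in> f - e}"

definition diamond_adj :: "real \<Rightarrow> nat \<Rightarrow> 'a set \<Rightarrow> 'a set set \<Rightarrow> 'a \<Rightarrow> 'a \<Rightarrow> bool" where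
  "diamond_adj \<gamma> k V E x y \<longleftrightarrow> x \<in> V \<and> y \<in> V \<and>
     real (card (diamonds k E x y)) \<ge> \<gamma> * real (card V choose (k - 1))"

definition independent_set :: "'a set \<Rightarrow> ('a \<Rightarrow> 'a \<Rightarrow> bool) \<Rightarrow> 'a set \<Rightarrow> bool" where
  "independent_set V adj I \<longleftrightarrow> I \<subseteq> V \<and> (\<forall>x\<in>I. \<forall>y\<in>I. x \<noteq> y \<longrightarrow> \<not> adj x y)"

end

theory Submission
  imports Defs
begin

text \<open>
  Every vertex x has a large link, the family of (k-1)-sets S with S + x an edge: double counting
  the pairs (T, S) with T a (k-2)-subset of V - x, S in the link and T \<subseteq> S gives
  |link x| \<ge> (\<delta>/n) (n choose k-1) \<ge> (1/3 + \<epsilon>) (n choose k-1).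
  Three such links live in a family of n choose k-1 sets, so by inclusion-exclusion two of them
  share at least \<epsilon> (n choose k-1) members, and every common member S of the links of x and y
  yields the (x,y)-diamond (S + x, S + y). Hence among any three vertices two are adjacent.
\<close>

definition link :: "'a set set \<Rightarrow> 'a \<Rightarrow> 'a set set" where
  "link E x = {S. x \<notin> S \<and> insert x S \<in> E}"

lemma kgraph_finite_edges:
  assumes "kgraph k V E"
  shows "finite E"
proof (rule finite_subset)
  show "E \<subseteq> Pow V"
    using assms by (auto simp: kgraph_def)
  show "finite (Pow V)"
    using assms by (simp add: kgraph_def)
qed

lemma link_member_subset_card:
  assumes "kgraph k V E" and "S \<in> link E x"
  shows "S \<subseteq> V" and "card S = k - 1"
proof -
  have edge: "insert x S \<subseteq> V" "card (insert x S) = k" "x \<notin> S"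
    using assms by (auto simp: kgraph_def link_def)
  then show "S \<subseteq> V" by blast
  moreover have "finite V"
    using assms(1) by (simp add: kgraph_def)
  ultimately have "finite S"
    by (meson finite_subset subset_insertI2)
  with edge(2,3) show "card S = k - 1" by simp
qed

lemma link_subset_subsets:
  assumes "kgraph k V E"
  shows "link E x \<subseteq> {S. S \<subseteq> V \<and> card S = k - 1}"
  using link_member_subset_card[OF assms] by blast

lemma finite_link:
  assumes "kgraph k V E"
  shows "finite (link E x)"
proof (rule finite_subset)
  show "link E x \<subseteq> Pow V"
    using link_subset_subsets[OF assms] by blast
  show "finite (Pow V)"
    using assms by (simp add: kgraph_def)
qed

lemma card_common_link_le_card_diamonds:
  assumes "kgraph k V E" and "x \<noteq> y"
  shows "card (link E x \<inter> link E y) \<le> card (diamonds k E x y)"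
proof (rule card_inj_on_le[where f = "\<lambda>S. (insert x S, insert y S)"])
  show "inj_on (\<lambda>S. (insert x S, insert y S)) (link E x \<inter> link E y)"
    by (rule inj_onI) (auto simp: link_def insert_ident)
  show "(\<lambda>S. (insert x S, insert y S)) ` (link E x \<inter> link E y) \<subseteq> diamonds k E x y"
  proof clarify
    fix S assume S: "S \<in> link E x" "S \<in> link E y"
    then have "insert x S \<inter> insert y S = S"
      using assms(2) by (auto simp: link_def)
    moreover have "card S = k - 1"
      using link_member_subset_card(2)[OF assms(1) S(1)] .
    ultimately show "(insert x S, insert y S) \<in> diamonds k E x y"
      using S assms(2) by (auto simp: link_def diamonds_def)
  qed
  show "finite (diamonds k E x y)"
    using kgraph_finite_edges[OF assms(1)]
    by (rule_tac finite_subset[of _ "E \<times> E"]) (auto simp: diamonds_def)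
qed

lemma min_codegree_le:
  assumes "kgraph k V E" and "S \<subseteq> V" and "card S = k - 1"
  shows "min_codegree k V E \<le> card {e \<in> E. S \<subseteq> e}"
  unfolding min_codegree_def
proof (rule Min_le)
  show "finite ((\<lambda>S. card {e \<in> E. S \<subseteq> e}) ` {S. S \<subseteq> V \<and> card S = k - 1})"
    using assms(1) by (auto simp: kgraph_def)
qed (use assms in auto)

lemma double_counting_le:
  assumes "finite A" and "finite B"
    and "\<And>a. a \<in> A \<Longrightarrow> d \<le> card {b \<in> B. R a b}"
    and "\<And>b. b \<in> B \<Longrightarrow> card {a \<in> A. R a b} \<le> r"
  shows "card A * d \<le> r * card B"
proof -
  have "card A * d \<le> (\<Sum>a\<in>A. card {b \<in> B. R a b})"
    using sum_mono[of A "\<lambda>_. d"] assms(3) by simp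
  also have "\<dots> = (\<Sum>a\<in>A. \<Sum>b\<in>B. if R a b then 1 else 0)"
    using assms(2) by (simp add: sum.inter_filter[symmetric])
  also have "\<dots> = (\<Sum>b\<in>B. \<Sum>a\<in>A. if R a b then 1 else 0)"
    by (rule sum.swap)
  also have "\<dots> = (\<Sum>b\<in>B. card {a \<in> A. R a b})"
    using assms(1) by (simp add: sum.inter_filter[symmetric])
  also have "\<dots> \<le> r * card B"
    using sum_mono[of B _ "\<lambda>_. r"] assms(4) by (simp add: mult.commute)
  finally show ?thesis .
qed

lemma min_codegree_le_card_link_extensions:
  assumes "kgraph k V E" and "T \<subseteq> V" and "x \<in> V" and "x \<notin> T" and "card T = k - 2" and "k \<ge> 2"
  shows "min_codegree k V E \<le> card {S \<in> link E x. T \<subseteq> S}"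
proof -
  have "finite T"
    using assms(1,2) finite_subset by (auto simp: kgraph_def)
  then have "min_codegree k V E \<le> card {e \<in> E. insert x T \<subseteq> e}"
    using assms by (intro min_codegree_le) auto
  also have "\<dots> \<le> card {S \<in> link E x. T \<subseteq> S}"
  proof (rule card_inj_on_le[where f = "\<lambda>e. e - {x}"])
    show "inj_on (\<lambda>e. e - {x}) {e \<in> E. insert x T \<subseteq> e}"
      by (rule inj_onI) (metis (no_types, lifting) insert_Diff insert_subset mem_Collect_eq)
    show "(\<lambda>e. e - {x}) ` {e \<in> E. insert x T \<subseteq> e} \<subseteq> {S \<in> link E x. T \<subseteq> S}"
      using assms(4) by (auto simp: link_def insert_absorb)
    show "finite {S \<in> link E x. T \<subseteq> S}"
      using finite_link[OF assms(1)] by simp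
  qed
  finally show ?thesis .
qed

lemma card_link_lower_bound:
  assumes "k \<ge> 2" and "kgraph k V E" and "x \<in> V"
  shows "(card V choose (k - 1)) * min_codegree k V E \<le> card V * card (link E x)"
proof -
  define n where "n = card V"
  define G where "G = {T. T \<subseteq> V - {x} \<and> card T = k - 2}"
  have "finite V"
    using assms(2) by (simp add: kgraph_def)
  then have card_G: "card G = (n - 1) choose (k - 2)"
    unfolding G_def n_def using n_subsets[of "V - {x}"] assms(3) by simp
  have "card G * min_codegree k V E \<le> (k - 1) * card (link E x)"
  proof (rule double_counting_le[where R = "\<lambda>T S. T \<subseteq> S"])
    show "finite G"
      unfolding G_def using \<open>finite V\<close> by simp
    show "finite (link E x)"
      using finite_link[OF assms(2)] .
    show "min_codegree k V E \<le> card {S \<in> link E x. T \<subseteq> S}" if "T \<in> G" for T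
      using that assms by (intro min_codegree_le_card_link_extensions) (auto simp: G_def)
    show "card {T \<in> G. T \<subseteq> S} \<le> k - 1" if S: "S \<in> link E x" for S
    proof -
      have "S \<subseteq> V - {x}" "card S = k - 1"
        using S link_member_subset_card[OF assms(2) S] by (auto simp: link_def)
      then have "{T \<in> G. T \<subseteq> S} = {T. T \<subseteq> S \<and> card T = k - 2}"
        unfolding G_def by auto
      moreover have "finite S"
        using \<open>S \<subseteq> V - {x}\<close> \<open>finite V\<close> finite_subset by blast
      ultimately have "card {T \<in> G. T \<subseteq> S} = (k - 1) choose (k - 2)"
        using n_subsets[of S "k - 2"] \<open>card S = k - 1\<close> by simp
      also have "\<dots> = k - 1"
        using binomial_Suc_n[of "k - 2"] assms(1) by (simp add: Suc_diff_Suc numeral_2_eq_2)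
      finally show ?thesis by simp
    qed
  qed
  then have codeg_bound: "((n - 1) choose (k - 2)) * min_codegree k V E \<le> (k - 1) * card (link E x)"
    using card_G by simp
  have binom: "(k - 1) * (n choose (k - 1)) = n * ((n - 1) choose (k - 2))"
    using times_binomial_minus1_eq[of "k - 1" n] assms(1) by (simp add: diff_diff_add numeral_2_eq_2)
  have "(k - 1) * ((n choose (k - 1)) * min_codegree k V E)
      = n * (((n - 1) choose (k - 2)) * min_codegree k V E)"
    using binom by (metis mult.assoc)
  also have "\<dots> \<le> n * ((k - 1) * card (link E x))"
    using codeg_bound by (rule mult_le_mono2)
  also have "\<dots> = (k - 1) * (n * card (link E x))"
    by (simp add: ac_simps)
  finally have "(k - 1) * ((n choose (k - 1)) * min_codegree k V E) \<le> (k - 1) * (n * card (link E x))" .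
  then show ?thesis
    using assms(1) n_def by simp
qed

lemma card_link_ge_fraction:
  fixes c :: real
  assumes "k \<ge> 2" and "kgraph k V E" and "x \<in> V"
    and "c * card V \<le> min_codegree k V E"
  shows "c * (card V choose (k - 1)) \<le> card (link E x)"
proof -
  have "card V > 0"
    using assms(2,3) card_gt_0_iff by (auto simp: kgraph_def)
  have "card V * (c * (card V choose (k - 1))) = (c * card V) * (card V choose (k - 1))"
    by (simp add: algebra_simps)
  also have "\<dots> \<le> real (min_codegree k V E) * (card V choose (k - 1))"
    using assms(4) by (simp add: mult_right_mono)
  also have "\<dots> \<le> card V * real (card (link E x))"
    using card_link_lower_bound[OF assms(1-3)] by (metis mult.commute of_nat_mono of_nat_mult)
  finally show ?thesis
    using \<open>card V > 0\<close> by simp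
qed

lemma card_Int_pairs_lower_bound:
  assumes "finite A" and "finite B" and "finite C"
  shows "card A + card B + card C \<le> card (A \<union> B \<union> C) + card (A \<inter> B) + card (A \<inter> C) + card (B \<inter> C)"
proof -
  have "card A + card B = card (A \<union> B) + card (A \<inter> B)"
    using card_Un_Int assms by blast
  moreover have "card (A \<union> B) + card C = card (A \<union> B \<union> C) + card ((A \<union> B) \<inter> C)"
    using card_Un_Int assms by (metis finite_UnI)
  moreover have "card ((A \<union> B) \<inter> C) \<le> card (A \<inter> C) + card (B \<inter> C)"
    by (metis Int_Un_distrib2 card_Un_le)
  ultimately show ?thesis by linarith
qed

lemma three_large_subsets_overlap:
  fixes \<epsilon> :: real
  assumes "finite U" and "A \<subseteq> U" and "B \<subseteq> U" and "C \<subseteq> U"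
    and "(1/3 + \<epsilon>) * card U \<le> card A"
    and "(1/3 + \<epsilon>) * card U \<le> card B"
    and "(1/3 + \<epsilon>) * card U \<le> card C"
  shows "\<epsilon> * card U \<le> card (A \<inter> B) \<or> \<epsilon> * card U \<le> card (A \<inter> C) \<or> \<epsilon> * card U \<le> card (B \<inter> C)"
proof -
  have fin: "finite A" "finite B" "finite C"
    using assms(1-4) by (meson finite_subset)+
  have "card (A \<union> B \<union> C) \<le> card U"
    using assms(1-4) by (intro card_mono) auto
  then have "card A + card B + card C \<le> card U + card (A \<inter> B) + card (A \<inter> C) + card (B \<inter> C)"
    using card_Int_pairs_lower_bound[OF fin] by linarith
  then have "real (card A) + card B + card C \<le> real (card U) + card (A \<inter> B) + card (A \<inter> C) + card (B \<inter> C)"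
    by (metis of_nat_add of_nat_mono)
  with assms(5-7) show ?thesis
    by (simp add: algebra_simps) linarith
qed

lemma diamond_adj_among_three:
  fixes \<epsilon> \<gamma> :: real
  assumes "k \<ge> 2" and "kgraph k V E" and "\<gamma> \<le> \<epsilon>"
    and "(1/3 + \<epsilon>) * card V \<le> min_codegree k V E"
    and "x \<in> V" "y \<in> V" "z \<in> V" "x \<noteq> y" "x \<noteq> z" "y \<noteq> z"
  shows "diamond_adj \<gamma> k V E x y \<or> diamond_adj \<gamma> k V E x z \<or> diamond_adj \<gamma> k V E y z"
proof -
  define F where "F = {S. S \<subseteq> V \<and> card S = k - 1}"
  have "finite V"
    using assms(2) by (simp add: kgraph_def)
  then have card_F: "card F = card V choose (k - 1)"
    unfolding F_def by (rule n_subsets)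
  have large_link: "(1/3 + \<epsilon>) * card F \<le> card (link E v)" if "v \<in> V" for v
    using card_link_ge_fraction[OF assms(1,2) that assms(4)] card_F by simp
  have adj: "diamond_adj \<gamma> k V E u v"
    if "u \<in> V" "v \<in> V" "u \<noteq> v" "\<epsilon> * card F \<le> card (link E u \<inter> link E v)" for u v
  proof -
    have "\<gamma> * card F \<le> \<epsilon> * card F"
      using assms(3) by (simp add: mult_right_mono)
    also have "\<dots> \<le> card (link E u \<inter> link E v)"
      using that(4) .
    also have "\<dots> \<le> card (diamonds k E u v)"
      using card_common_link_le_card_diamonds[OF assms(2) that(3)] by simp
    finally show ?thesis
      using that(1,2) card_F by (simp add: diamond_adj_def)
  qed
  have "\<epsilon> * card F \<le> card (link E x \<inter> link E y) \<or> \<epsilon> * card F \<le> card (link E x \<inter> link E z)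
      \<or> \<epsilon> * card F \<le> card (link E y \<inter> link E z)"
    using \<open>finite V\<close> link_subset_subsets[OF assms(2)] assms(5-7)
    by (intro three_large_subsets_overlap large_link) (auto simp: F_def)
  then show ?thesis
    using adj assms(5-10) by blast
qed

theorem lemma7p2:
  fixes k :: nat and V :: "'a set" and E :: "'a set set" and \<epsilon> \<gamma> :: real
  assumes "k \<ge> 2"
    and "kgraph k V E"
    and "k - 1 \<le> card V"
    and "\<epsilon> \<ge> \<gamma>" and "\<gamma> > 0"
    and "real (min_codegree k V E) \<ge> (1/3 + \<epsilon>) * real (card V)"
  shows "\<forall>I. independent_set V (diamond_adj \<gamma> k V E) I \<longrightarrow> card I \<le> 2"
proof (intro allI impI)
  fix I assume indep: "independent_set V (diamond_adj \<gamma> k V E) I"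
  show "card I \<le> 2"
  proof (rule ccontr)
    assume "\<not> card I \<le> 2"
    then obtain J where "J \<subseteq> I" "card J = 3"
      using obtain_subset_with_card_n[of 3 I] by force
    then obtain x y z where "x \<in> I" "y \<in> I" "z \<in> I" "x \<noteq> y" "x \<noteq> z" "y \<noteq> z"
      by (auto simp: card_3_iff)
    moreover have "I \<subseteq> V"
      using indep by (simp add: independent_set_def)
    ultimately have "diamond_adj \<gamma> k V E x y \<or> diamond_adj \<gamma> k V E x z \<or> diamond_adj \<gamma> k V E y z"
      by (intro diamond_adj_among_three[OF assms(1,2,4,6)]) auto
    with indep \<open>x \<in> I\<close> \<open>y \<in> I\<close> \<open>z \<in> I\<close> \<open>x \<noteq> y\<close> \<open>x \<noteq> z\<close> \<open>y \<noteq> z\<close> show False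
      unfolding independent_set_def by blast
  qed
qed

end
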